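(* Let $G$ and $H$ be graphs with no isolated vertices. Then $$\gamma_{oir2}(G\times H)\leq \min\{\gamma_{oir2}(H)\,|V(G)|,\ \gamma_{oir2}(G)\,|V(H)|\}.$$
   Context: All graphs are finite and simple. For a graph $G$, a function $f:V(G)\to\mathcal{P}(\{1,2\})$ is an outer-independent 2-rainbow dominating function (OI2RD function) if every vertex $v$ with $f(v)=\emptyset$ satisfies $\bigcup_{u\in N(v)}f(u)=\{1,2\}$ and the set $\{v: f(v)=\emptyset\}$ is independent. The weight of $f$ is $\sum_{v}|f(v)|$ and $\gamma_{oir2}(G)$ is the minimum weight of an OI2RD function of $G$. The direct product $G\times H$ has vertex set $V(G)\times V(H)$, with $(x,y)(x',y')$ an edge iff $xx'\in E(G)$ and $yy'\in E(H)$. *)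

theory Defs
  imports Main
begin

definition fin_graph :: "'a set \<Rightarrow> ('a \<Rightarrow> 'a \<Rightarrow> bool) \<Rightarrow> bool" where
  "fin_graph V E \<longleftrightarrow> finite V \<and> (\<forall>x y. E x y \<longrightarrow> x \<in> V \<and> y \<in> V)
     \<and> (\<forall>x y. E x y \<longrightarrow> E y x) \<and> (\<forall>x. \<not> E x x)"

definition no_isolated :: "'a set \<Rightarrow> ('a \<Rightarrow> 'a \<Rightarrow> bool) \<Rightarrow> bool" where
  "no_isolated V E \<longleftrightarrow> (\<forall>v\<in>V. \<exists>u. E v u)"

definition nbhd :: "'a set \<Rightarrow> ('a \<Rightarrow> 'a \<Rightarrow> bool) \<Rightarrow> 'a \<Rightarrow> 'a set" where
  "nbhd V E v = {u \<in> V. E v u}"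

text \<open>Outer-independent 2-rainbow dominating function. Labels are subsets of {1,2};
  f is required to be empty outside V so that the weight is determined on V.\<close>
definition oi2rdf :: "'a set \<Rightarrow> ('a \<Rightarrow> 'a \<Rightarrow> bool) \<Rightarrow> ('a \<Rightarrow> nat set) \<Rightarrow> bool" where
  "oi2rdf V E f \<longleftrightarrow> (\<forall>v. f v \<subseteq> {1,2}) \<and> (\<forall>v. v \<notin> V \<longrightarrow> f v = {})
     \<and> (\<forall>v\<in>V. f v = {} \<longrightarrow> (\<Union>u\<in>nbhd V E v. f u) = {1,2})
     \<and> (\<forall>u\<in>V. \<forall>v\<in>V. f u = {} \<and> f v = {} \<longrightarrow> \<not> E u v)"

definition weight :: "'a set \<Rightarrow> ('a \<Rightarrow> nat set) \<Rightarrow> nat" where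
  "weight V f = (\<Sum>v\<in>V. card (f v))"

definition gamma_oir2 :: "'a set \<Rightarrow> ('a \<Rightarrow> 'a \<Rightarrow> bool) \<Rightarrow> nat" where
  "gamma_oir2 V E = Min {weight V f | f. oi2rdf V E f}"

definition dprod_V :: "'a set \<Rightarrow> 'b set \<Rightarrow> ('a \<times> 'b) set" where
  "dprod_V VG VH = VG \<times> VH"

definition dprod_E :: "('a \<Rightarrow> 'a \<Rightarrow> bool) \<Rightarrow> ('b \<Rightarrow> 'b \<Rightarrow> bool) \<Rightarrow> ('a \<times> 'b) \<Rightarrow> ('a \<times> 'b) \<Rightarrow> bool" where
  "dprod_E EG EH p q \<longleftrightarrow> EG (fst p) (fst q) \<and> EH (snd p) (snd q)"

end

theory Submission
  imports Defs
begin

text \<open>Both projections of \<open>G \<times> H\<close> are graph homomorphisms onto the factors, and when the other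
  factor has no isolated vertices every neighbour of the image of a vertex is the image of a
  neighbour. Pulling an OI2RD function of a factor back along such a map gives an OI2RD function
  of the product: an empty label sees the same labels in its neighbourhood as its image does, and
  two adjacent empty labels would map to two adjacent empty labels. Pulling back a minimum OI2RD
  function of \<open>H\<close> copies each label \<open>|V(G)|\<close> times, giving weight \<open>\<gamma>\<^sub>o\<^sub>i\<^sub>r\<^sub>2(H) |V(G)|\<close>, and
  symmetrically for \<open>G\<close>.\<close>

lemma oi2rdf_full_labelling: "oi2rdf V E (\<lambda>v. if v \<in> V then {1,2} else {})"
  unfolding oi2rdf_def by auto

lemma oi2rdf_labels_subset: "oi2rdf V E f \<Longrightarrow> f v \<subseteq> {1,2}"
  unfolding oi2rdf_def by simp

lemma weight_oi2rdf_le: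
  assumes "oi2rdf V E f" "finite V"
  shows "weight V f \<le> 2 * card V"
proof -
  have "card (f v) \<le> 2" for v
  proof -
    have "card (f v) \<le> card {1::nat,2}"
      using oi2rdf_labels_subset[OF assms(1)] by (intro card_mono) auto
    thus ?thesis by simp
  qed
  hence "weight V f \<le> (\<Sum>v\<in>V. 2)" unfolding weight_def by (rule sum_mono)
  thus ?thesis by simp
qed

lemma finite_oi2rdf_weights:
  assumes "finite V"
  shows "finite {weight V f | f. oi2rdf V E f}"
  by (rule finite_subset[of _ "{..2 * card V}"]) (use weight_oi2rdf_le assms in auto)

lemma gamma_oir2_le_weight:
  assumes "finite V" "oi2rdf V E f"
  shows "gamma_oir2 V E \<le> weight V f"
  unfolding gamma_oir2_def using assms finite_oi2rdf_weights[OF assms(1), of E]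
  by (intro Min_le) auto

lemma gamma_oir2_attained:
  assumes "finite V"
  obtains f where "oi2rdf V E f" "weight V f = gamma_oir2 V E"
proof -
  have "{weight V f | f. oi2rdf V E f} \<noteq> {}" using oi2rdf_full_labelling by blast
  hence "gamma_oir2 V E \<in> {weight V f | f. oi2rdf V E f}"
    unfolding gamma_oir2_def by (rule Min_in[OF finite_oi2rdf_weights[OF assms]])
  thus ?thesis using that by auto
qed

definition nbhd_surjective_hom ::
    "'a set \<Rightarrow> ('a \<Rightarrow> 'a \<Rightarrow> bool) \<Rightarrow> 'b set \<Rightarrow> ('b \<Rightarrow> 'b \<Rightarrow> bool) \<Rightarrow> ('a \<Rightarrow> 'b) \<Rightarrow> bool" where
  "nbhd_surjective_hom V' E' V E p \<longleftrightarrow> p ` V' \<subseteq> V \<and> (\<forall>x y. E' x y \<longrightarrow> E (p x) (p y))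
     \<and> (\<forall>x\<in>V'. \<forall>u. E (p x) u \<longrightarrow> (\<exists>y\<in>V'. E' x y \<and> p y = u))"

lemma oi2rdf_pullback:
  assumes f: "oi2rdf V E f" and p: "nbhd_surjective_hom V' E' V E p"
  shows "oi2rdf V' E' (\<lambda>x. if x \<in> V' then f (p x) else {})" (is "oi2rdf V' E' ?F")
proof -
  have into: "p x \<in> V" if "x \<in> V'" for x
    using p that unfolding nbhd_surjective_hom_def by blast
  have edge: "E (p x) (p y)" if "E' x y" for x y
    using p that unfolding nbhd_surjective_hom_def by blast
  have lift: "\<exists>y\<in>V'. E' x y \<and> p y = u" if "x \<in> V'" "E (p x) u" for x u
    using p that unfolding nbhd_surjective_hom_def by blast
  have dom: "(\<Union>u\<in>nbhd V E v. f u) = {1,2}" if "v \<in> V" "f v = {}" for v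
    using f that unfolding oi2rdf_def by simp
  have indep: "\<not> E u v" if "u \<in> V" "v \<in> V" "f u = {}" "f v = {}" for u v
    using f that unfolding oi2rdf_def by simp
  note labels = oi2rdf_labels_subset[OF f]
  have "(\<Union>y\<in>nbhd V' E' x. ?F y) = {1,2}" if x: "x \<in> V'" "?F x = {}" for x
  proof (rule antisym)
    have "?F y \<subseteq> {1,2}" for y using labels[of "p y"] by simp
    thus "(\<Union>y\<in>nbhd V' E' x. ?F y) \<subseteq> {1,2}" by (rule UN_least)
    have "f u \<subseteq> (\<Union>y\<in>nbhd V' E' x. ?F y)" if u: "u \<in> nbhd V E (p x)" for u
    proof -
      obtain y where "y \<in> V'" "E' x y" "p y = u"
        using lift[OF x(1)] u unfolding nbhd_def by blast
      thus ?thesis unfolding nbhd_def by auto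
    qed
    hence "(\<Union>u\<in>nbhd V E (p x). f u) \<subseteq> (\<Union>y\<in>nbhd V' E' x. ?F y)" by (rule UN_least)
    thus "{1,2} \<subseteq> (\<Union>y\<in>nbhd V' E' x. ?F y)" using dom[OF into[OF x(1)]] x by simp
  qed
  moreover have "\<not> E' x y" if "x \<in> V'" "y \<in> V'" "?F x = {}" "?F y = {}" for x y
    using indep[OF into into] edge that by auto
  moreover have "?F y \<subseteq> {1,2}" for y using labels[of "p y"] by simp
  ultimately show ?thesis unfolding oi2rdf_def by simp
qed

lemma nbhd_surjective_hom_fst:
  assumes G: "fin_graph VG EG" and H: "fin_graph VH EH" and nH: "no_isolated VH EH"
  shows "nbhd_surjective_hom (dprod_V VG VH) (dprod_E EG EH) VG EG fst"
  unfolding nbhd_surjective_hom_def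
proof (intro conjI ballI allI impI)
  fix x u assume x: "x \<in> dprod_V VG VH" and xu: "EG (fst x) u"
  obtain h' where xh': "EH (snd x) h'" using x nH unfolding no_isolated_def dprod_V_def by auto
  have "(u, h') \<in> dprod_V VG VH" using G H xu xh' unfolding fin_graph_def dprod_V_def by blast
  moreover have "dprod_E EG EH x (u, h')" using xu xh' unfolding dprod_E_def by simp
  ultimately show "\<exists>y\<in>dprod_V VG VH. dprod_E EG EH x y \<and> fst y = u" by force
qed (auto simp: dprod_V_def dprod_E_def)

lemma nbhd_surjective_hom_snd:
  assumes G: "fin_graph VG EG" and H: "fin_graph VH EH" and nG: "no_isolated VG EG"
  shows "nbhd_surjective_hom (dprod_V VG VH) (dprod_E EG EH) VH EH snd"
  unfolding nbhd_surjective_hom_def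
proof (intro conjI ballI allI impI)
  fix x u assume x: "x \<in> dprod_V VG VH" and xu: "EH (snd x) u"
  obtain g' where xg': "EG (fst x) g'" using x nG unfolding no_isolated_def dprod_V_def by auto
  have "(g', u) \<in> dprod_V VG VH" using G H xu xg' unfolding fin_graph_def dprod_V_def by blast
  moreover have "dprod_E EG EH x (g', u)" using xu xg' unfolding dprod_E_def by simp
  ultimately show "\<exists>y\<in>dprod_V VG VH. dprod_E EG EH x y \<and> snd y = u" by force
qed (auto simp: dprod_V_def dprod_E_def)

lemma weight_pullback_fst:
  "weight (dprod_V VG VH) (\<lambda>x. if x \<in> dprod_V VG VH then f (fst x) else {})
    = weight VG f * card VH"
proof -
  have "weight (dprod_V VG VH) (\<lambda>x. if x \<in> dprod_V VG VH then f (fst x) else {})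
      = (\<Sum>g\<in>VG. \<Sum>h\<in>VH. card (f g))"
    unfolding weight_def dprod_V_def sum.cartesian_product by (intro sum.cong) auto
  thus ?thesis by (simp add: weight_def sum_distrib_left mult.commute)
qed

lemma weight_pullback_snd:
  "weight (dprod_V VG VH) (\<lambda>x. if x \<in> dprod_V VG VH then f (snd x) else {})
    = weight VH f * card VG"
proof -
  have "weight (dprod_V VG VH) (\<lambda>x. if x \<in> dprod_V VG VH then f (snd x) else {})
      = (\<Sum>g\<in>VG. \<Sum>h\<in>VH. card (f h))"
    unfolding weight_def dprod_V_def sum.cartesian_product by (intro sum.cong) auto
  thus ?thesis by (simp add: weight_def mult.commute)
qed

theorem theorem2:
  fixes VG :: "'a set" and EG :: "'a \<Rightarrow> 'a \<Rightarrow> bool"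
    and VH :: "'b set" and EH :: "'b \<Rightarrow> 'b \<Rightarrow> bool"
  assumes "fin_graph VG EG" and "fin_graph VH EH"
    and "no_isolated VG EG" and "no_isolated VH EH"
  shows "gamma_oir2 (dprod_V VG VH) (dprod_E EG EH)
           \<le> min (gamma_oir2 VH EH * card VG) (gamma_oir2 VG EG * card VH)"
proof -
  have fin: "finite VG" "finite VH" "finite (dprod_V VG VH)"
    using assms(1,2) unfolding fin_graph_def dprod_V_def by auto
  obtain g where g: "oi2rdf VG EG g" "weight VG g = gamma_oir2 VG EG"
    using gamma_oir2_attained[OF fin(1)] by blast
  obtain h where h: "oi2rdf VH EH h" "weight VH h = gamma_oir2 VH EH"
    using gamma_oir2_attained[OF fin(2)] by blast
  have "gamma_oir2 (dprod_V VG VH) (dprod_E EG EH) \<le> gamma_oir2 VH EH * card VG"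
    using gamma_oir2_le_weight[OF fin(3)
        oi2rdf_pullback[OF h(1) nbhd_surjective_hom_snd[OF assms(1,2,3)]]]
    by (simp add: weight_pullback_snd h(2))
  moreover have "gamma_oir2 (dprod_V VG VH) (dprod_E EG EH) \<le> gamma_oir2 VG EG * card VH"
    using gamma_oir2_le_weight[OF fin(3)
        oi2rdf_pullback[OF g(1) nbhd_surjective_hom_fst[OF assms(1,2,4)]]]
    by (simp add: weight_pullback_fst g(2))
  ultimately show ?thesis by simp
qed

end
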